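(* Let $f,h$ be probability densities on $\mathbb{R}$ with finite second moments and the same first moment. Then for every $N\ge1$, \[ d_{GTW,N}(f^{\otimes N},h^{\otimes N})=d_{GTW,1}(f,h). \]
   Context: With $\hat f(\xi)=\int f(v)e^{-iv\cdot\xi}dv$, the Gabetta–Toscani–Wennberg distance on probability measures on $\mathbb{R}^k$ is $d_{GTW,k}(f,h)=\sup_{\xi\in\mathbb{R}^k\setminus\{0\}}|\hat f(\xi)-\hat h(\xi)|/|\xi|^2$. *)

theory Defs
  imports "HOL-Analysis.Analysis"
begin

definition fourier :: "('a::euclidean_space \<Rightarrow> real) \<Rightarrow> 'a \<Rightarrow> complex" where
  "fourier f \<xi> = (\<integral>v. complex_of_real (f v) * exp (- \<i> * complex_of_real (v \<bullet> \<xi>)) \<partial>lborel)"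

definition d_GTW :: "('a::euclidean_space \<Rightarrow> real) \<Rightarrow> ('a \<Rightarrow> real) \<Rightarrow> ereal" where
  "d_GTW f h = (SUP \<xi>\<in>UNIV - {0}. ereal (cmod (fourier f \<xi> - fourier h \<xi>) / (norm \<xi>)\<^sup>2))"

definition prob_density :: "('a::euclidean_space \<Rightarrow> real) \<Rightarrow> bool" where
  "prob_density f \<longleftrightarrow> f \<in> borel_measurable lborel \<and> (\<forall>x. 0 \<le> f x) \<and>
     integrable lborel f \<and> (\<integral>x. f x \<partial>lborel) = 1"

text \<open>N-fold tensor product of a density on the real line, on real^'n (N = CARD('n)).\<close>
definition tensor_pow :: "(real \<Rightarrow> real) \<Rightarrow> real^'n \<Rightarrow> real" where
  "tensor_pow f = (\<lambda>v. \<Prod>i\<in>UNIV. f (v $ i))"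

end

theory Submission
  imports Defs
begin

text \<open>The Fourier transform of a tensor power is the product of the one-dimensional
  transforms of the coordinates. The transform of a probability density is 1 at 0 and
  bounded by 1, so the estimate |prod a_i - prod b_i| <= sum |a_i - b_i| transfers a
  quadratic bound d t^2 on the one-dimensional difference to d |xi|^2 in dimension N;
  conversely, evaluating on a coordinate axis recovers the one-dimensional difference
  exactly. Hence the two distances have the same quadratic bounds.\<close>

lemma integral_lborel_prod_Basis:
  fixes g :: "'a::euclidean_space \<Rightarrow> real \<Rightarrow> complex"
  assumes int: "\<And>b. b \<in> Basis \<Longrightarrow> integrable lborel (g b)"
  shows "(\<integral>x. (\<Prod>b\<in>Basis. g b (x \<bullet> b)) \<partial>(lborel::'a measure)) = (\<Prod>b\<in>Basis. integral\<^sup>L lborel (g b))"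
proof -
  interpret product_sigma_finite "\<lambda>_::'a. lborel::real measure"
    by standard
  have [measurable]: "\<And>b. b \<in> Basis \<Longrightarrow> g b \<in> borel_measurable borel"
    using int by auto
  have "(\<integral>x. (\<Prod>b\<in>Basis. g b (x \<bullet> b)) \<partial>(lborel::'a measure))
     = (\<integral>x. (\<Prod>b\<in>Basis. g b (x \<bullet> b)) \<partial>(distr (\<Pi>\<^sub>M b\<in>Basis. lborel) borel (\<lambda>f. \<Sum>b\<in>Basis. f b *\<^sub>R b)))"
    by (subst lborel_eq[where 'a='a]) (rule refl)
  also have "\<dots> = (\<integral>f. (\<Prod>b\<in>Basis. g b ((\<Sum>b\<in>Basis. f b *\<^sub>R b) \<bullet> b)) \<partial>(\<Pi>\<^sub>M b\<in>Basis. lborel))"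
    by (rule integral_distr) auto
  also have "\<dots> = (\<integral>f. (\<Prod>b\<in>Basis. g b (f b)) \<partial>(\<Pi>\<^sub>M b\<in>Basis. lborel))"
    by (intro Bochner_Integration.integral_cong prod.cong refl)
      (simp add: inner_sum_left inner_Basis if_distrib cong: if_cong)
  also have "\<dots> = (\<Prod>b\<in>Basis. integral\<^sup>L lborel (g b))"
    by (rule product_integral_prod) (auto intro: int)
  finally show ?thesis .
qed

lemma integrable_fourier_integrand:
  assumes "integrable lborel (f::real \<Rightarrow> real)"
  shows "integrable lborel (\<lambda>t. complex_of_real (f t) * exp (- \<i> * complex_of_real (t * c)))"
proof (rule Bochner_Integration.integrable_bound[of lborel "\<lambda>t. complex_of_real (f t)"])
  show "integrable lborel (\<lambda>t. complex_of_real (f t))" using assms by simp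
  show "(\<lambda>t. complex_of_real (f t) * exp (- \<i> * complex_of_real (t * c))) \<in> borel_measurable lborel"
    using borel_measurable_integrable[OF assms] by measurable
  show "AE t in lborel. norm (complex_of_real (f t) * exp (- \<i> * complex_of_real (t * c)))
      \<le> norm (complex_of_real (f t))"
    by (simp add: norm_mult)
qed

lemma prod_Basis_vec:
  fixes G :: "real^'n \<Rightarrow> complex"
  shows "(\<Prod>b\<in>Basis. G b) = (\<Prod>i\<in>UNIV. G (axis i 1))"
proof -
  have Basis_range: "(Basis :: (real^'n) set) = range (\<lambda>i. axis i 1)"
    unfolding Basis_vec_def by auto
  show ?thesis
    unfolding Basis_range by (subst prod.reindex) (auto simp: inj_on_def axis_eq_axis)
qed

lemma fourier_tensor_pow:
  assumes "integrable lborel f"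
  shows "fourier (tensor_pow f :: real^'n \<Rightarrow> real) \<xi> = (\<Prod>i\<in>UNIV. fourier f (\<xi> $ i))"
proof -
  define g where "g b t = complex_of_real (f t) * exp (- \<i> * complex_of_real (t * (\<xi> \<bullet> b)))"
    for b :: "real^'n" and t
  have integrand: "complex_of_real (tensor_pow f v) * exp (- \<i> * complex_of_real (v \<bullet> \<xi>))
      = (\<Prod>b\<in>Basis. g b (v \<bullet> b))" for v :: "real^'n"
  proof -
    have "(\<Prod>b\<in>Basis. g b (v \<bullet> b))
        = (\<Prod>i\<in>UNIV. complex_of_real (f (v$i))) * (\<Prod>i\<in>UNIV. exp (- \<i> * complex_of_real (v$i * \<xi>$i)))"
      by (simp add: prod_Basis_vec g_def prod.distrib inner_axis' inner_axis)
    also have "\<dots> = complex_of_real (tensor_pow f v) * exp (- \<i> * complex_of_real (v \<bullet> \<xi>))"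
      by (simp add: tensor_pow_def exp_sum[symmetric] inner_vec_def sum_distrib_left)
    finally show ?thesis by simp
  qed
  have "fourier (tensor_pow f :: real^'n \<Rightarrow> real) \<xi> = (\<integral>v. (\<Prod>b\<in>Basis. g b (v \<bullet> b)) \<partial>lborel)"
    unfolding fourier_def integrand ..
  also have "\<dots> = (\<Prod>b\<in>Basis. integral\<^sup>L lborel (g b))"
    unfolding g_def by (rule integral_lborel_prod_Basis) (rule integrable_fourier_integrand[OF assms])
  also have "\<dots> = (\<Prod>i\<in>UNIV. fourier f (\<xi> $ i))"
    by (simp add: prod_Basis_vec fourier_def g_def[abs_def] inner_axis)
  finally show ?thesis .
qed

lemma fourier_0_prob_density: "prob_density f \<Longrightarrow> fourier f 0 = 1"
  by (simp add: fourier_def prob_density_def)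

lemma norm_fourier_prob_density_le_1:
  assumes "prob_density f"
  shows "norm (fourier f t) \<le> 1"
proof -
  have "norm (fourier f t) \<le> (\<integral>v. norm (complex_of_real (f v) * exp (- \<i> * complex_of_real (v \<bullet> t))) \<partial>lborel)"
    unfolding fourier_def by (rule integral_norm_bound)
  also have "\<dots> = 1"
    using assms by (simp add: prob_density_def norm_mult)
  finally show ?thesis .
qed

lemma d_GTW_nonneg: "0 \<le> d_GTW (f :: 'a::euclidean_space \<Rightarrow> real) h"
proof -
  obtain b :: 'a where "b \<in> Basis"
    using nonempty_Basis by blast
  then have "ereal (cmod (fourier f b - fourier h b) / (norm b)\<^sup>2) \<le> d_GTW f h"
    unfolding d_GTW_def by (intro SUP_upper) (auto dest: nonzero_Basis)
  then show ?thesis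
    by (rule order_trans[rotated]) simp
qed

lemma d_GTW_le_ereal_iff:
  assumes "fourier f 0 = fourier h 0"
  shows "d_GTW f h \<le> ereal d \<longleftrightarrow> (\<forall>\<xi>. cmod (fourier f \<xi> - fourier h \<xi>) \<le> d * (norm \<xi>)\<^sup>2)"
proof
  assume le: "d_GTW f h \<le> ereal d"
  show "\<forall>\<xi>. cmod (fourier f \<xi> - fourier h \<xi>) \<le> d * (norm \<xi>)\<^sup>2"
  proof
    fix \<xi>
    show "cmod (fourier f \<xi> - fourier h \<xi>) \<le> d * (norm \<xi>)\<^sup>2"
    proof (cases "\<xi> = 0")
      case False
      have "ereal (cmod (fourier f \<xi> - fourier h \<xi>) / (norm \<xi>)\<^sup>2) \<le> d_GTW f h"
        unfolding d_GTW_def by (rule SUP_upper) (use False in auto)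
      then have "ereal (cmod (fourier f \<xi> - fourier h \<xi>) / (norm \<xi>)\<^sup>2) \<le> ereal d"
        using le by (rule order_trans)
      then have "cmod (fourier f \<xi> - fourier h \<xi>) / (norm \<xi>)\<^sup>2 \<le> d"
        by simp
      with False show ?thesis
        by (simp add: divide_le_eq mult.commute)
    qed (simp add: assms)
  qed
next
  assume "\<forall>\<xi>. cmod (fourier f \<xi> - fourier h \<xi>) \<le> d * (norm \<xi>)\<^sup>2"
  then show "d_GTW f h \<le> ereal d"
    unfolding d_GTW_def by (intro SUP_least) (simp add: divide_le_eq)
qed

lemma d_GTW_le_by_quadratic_bounds:
  fixes f h :: "'a::euclidean_space \<Rightarrow> real" and f' h' :: "'b::euclidean_space \<Rightarrow> real"
  assumes "fourier f 0 = fourier h 0" and "fourier f' 0 = fourier h' 0"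
    and transfer: "\<And>d. \<forall>\<xi>. cmod (fourier f' \<xi> - fourier h' \<xi>) \<le> d * (norm \<xi>)\<^sup>2 \<Longrightarrow>
        \<forall>\<eta>. cmod (fourier f \<eta> - fourier h \<eta>) \<le> d * (norm \<eta>)\<^sup>2"
  shows "d_GTW f h \<le> d_GTW f' h'"
proof (cases "d_GTW f' h'")
  case (real d)
  then have "\<forall>\<xi>. cmod (fourier f' \<xi> - fourier h' \<xi>) \<le> d * (norm \<xi>)\<^sup>2"
    using d_GTW_le_ereal_iff[OF assms(2), of d] by simp
  then show ?thesis
    using transfer d_GTW_le_ereal_iff[OF assms(1), of d] real by simp
qed (use d_GTW_nonneg[of f' h'] in auto)

lemma fourier_0_tensor_pow:
  assumes "prob_density f"
  shows "fourier (tensor_pow f :: real^'n \<Rightarrow> real) 0 = 1"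
  using assms by (simp add: fourier_tensor_pow prob_density_def fourier_0_prob_density)

lemma fourier_tensor_pow_axis:
  assumes "prob_density f"
  shows "fourier (tensor_pow f :: real^'n \<Rightarrow> real) (axis i t) = fourier f t"
proof -
  have "fourier (tensor_pow f :: real^'n \<Rightarrow> real) (axis i t) = (\<Prod>j\<in>UNIV. fourier f (axis i t $ j))"
    using assms by (simp add: fourier_tensor_pow prob_density_def)
  also have "\<dots> = (\<Prod>j\<in>UNIV. if j = i then fourier f t else 1)"
    by (rule prod.cong) (auto simp: axis_def fourier_0_prob_density[OF assms])
  finally show ?thesis
    by simp
qed

lemma d_GTW_tensor_pow_le:
  assumes f: "prob_density f" and h: "prob_density h"
  shows "d_GTW (tensor_pow f :: real^'n \<Rightarrow> real) (tensor_pow h) \<le> d_GTW f h"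
proof (rule d_GTW_le_by_quadratic_bounds)
  have intf: "integrable lborel f" and inth: "integrable lborel h"
    using f h by (auto simp: prob_density_def)
  note fourier_tensor = fourier_tensor_pow[OF intf] fourier_tensor_pow[OF inth]
  show "fourier (tensor_pow f :: real^'n \<Rightarrow> real) 0 = fourier (tensor_pow h) 0"
    by (simp add: fourier_tensor fourier_0_prob_density f h)
  show "fourier f 0 = fourier h 0"
    by (simp add: fourier_0_prob_density f h)
  fix d
  assume bound: "\<forall>t. cmod (fourier f t - fourier h t) \<le> d * (norm t)\<^sup>2"
  show "\<forall>\<xi>::real^'n. cmod (fourier (tensor_pow f) \<xi> - fourier (tensor_pow h) \<xi>) \<le> d * (norm \<xi>)\<^sup>2"
  proof
    fix \<xi> :: "real^'n"
    have "cmod (fourier (tensor_pow f) \<xi> - fourier (tensor_pow h) \<xi>)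
        \<le> (\<Sum>i\<in>UNIV. cmod (fourier f (\<xi>$i) - fourier h (\<xi>$i)))"
      unfolding fourier_tensor
      by (rule norm_prod_diff) (auto intro: norm_fourier_prob_density_le_1 f h)
    also have "\<dots> \<le> (\<Sum>i\<in>UNIV. d * (\<xi>$i)\<^sup>2)"
      using bound by (intro sum_mono) simp
    also have "\<dots> = d * (norm \<xi>)\<^sup>2"
      unfolding power2_norm_eq_inner inner_vec_def by (simp add: power2_eq_square sum_distrib_left)
    finally show "cmod (fourier (tensor_pow f) \<xi> - fourier (tensor_pow h) \<xi>) \<le> d * (norm \<xi>)\<^sup>2" .
  qed
qed

lemma d_GTW_le_tensor_pow:
  assumes f: "prob_density f" and h: "prob_density h"
  shows "d_GTW f h \<le> d_GTW (tensor_pow f :: real^'n \<Rightarrow> real) (tensor_pow h)"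
proof (rule d_GTW_le_by_quadratic_bounds)
  show "fourier f 0 = fourier h 0"
    by (simp add: fourier_0_prob_density f h)
  show "fourier (tensor_pow f :: real^'n \<Rightarrow> real) 0 = fourier (tensor_pow h) 0"
    by (simp add: fourier_0_tensor_pow f h)
  fix d
  assume bound: "\<forall>\<xi>::real^'n. cmod (fourier (tensor_pow f) \<xi> - fourier (tensor_pow h) \<xi>) \<le> d * (norm \<xi>)\<^sup>2"
  show "\<forall>t. cmod (fourier f t - fourier h t) \<le> d * (norm t)\<^sup>2"
  proof
    fix t :: real and i :: 'n
    have "axis i t = t *\<^sub>R axis i 1"
      by (simp add: vec_eq_iff axis_def)
    then have "norm (axis i t) = \<bar>t\<bar>"
      by simp
    then show "cmod (fourier f t - fourier h t) \<le> d * (norm t)\<^sup>2"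
      using bound[rule_format, of "axis i t"] by (simp add: fourier_tensor_pow_axis f h)
  qed
qed

theorem lemma7:
  fixes f h :: "real \<Rightarrow> real"
  assumes "prob_density f" and "prob_density h"
    and "integrable lborel (\<lambda>x. x\<^sup>2 * f x)"
    and "integrable lborel (\<lambda>x. x\<^sup>2 * h x)"
    and "(\<integral>x. x * f x \<partial>lborel) = (\<integral>x. x * h x \<partial>lborel)"
  shows "d_GTW (tensor_pow f :: real^'n \<Rightarrow> real) (tensor_pow h) = d_GTW f h"
  using d_GTW_tensor_pow_le[OF assms(1,2)] d_GTW_le_tensor_pow[OF assms(1,2)] by (rule antisym)

end
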